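(* Let $\{G_i\}$ be a family of graphs with common induced subgraph $J$, embedded as $J_i\subseteq G_i$, and let $H=\amalg\{(G_i|J_i)\}$. If the diameter of $J$ is at most $2$, then every $G_i$ is isometrically embedded in $H$.
   Context: $d_G$ is shortest-path distance in $G$. $J$ is a common induced subgraph of each $G_i$ via injective maps $\iota_i:V(J)\to V(G_i)$ with $\iota_i(x)\iota_i(y)\in E(G_i)$ iff $xy\in E(J)$; $J_i$ is the induced image. $H=\amalg\{(G_i|J_i)\}$ is obtained from the disjoint union of the $G_i$ by identifying, for each $x\in V(J)$, all vertices $\iota_i(x)$ into one vertex; each $G_i$ is regarded as a subgraph of $H$. A subgraph $G$ of $H$ is isometrically embedded in $H$ if $d_G(u,v)=d_H(u,v)$ for all $u,v\in V(G)$. *)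

theory Defs
  imports Main "HOL-Library.Extended_Nat"
begin

definition is_graph :: "'a set \<Rightarrow> ('a \<Rightarrow> 'a \<Rightarrow> bool) \<Rightarrow> bool" where
  "is_graph V E \<longleftrightarrow> (\<forall>x y. E x y \<longrightarrow> x \<in> V \<and> y \<in> V) \<and> (\<forall>x y. E x y \<longrightarrow> E y x) \<and> (\<forall>x. \<not> E x x)"

definition walks :: "('a \<Rightarrow> 'a \<Rightarrow> bool) \<Rightarrow> 'a \<Rightarrow> 'a \<Rightarrow> 'a list set" where
  "walks E u v = {xs. xs \<noteq> [] \<and> hd xs = u \<and> last xs = v \<and>
                   (\<forall>k. Suc k < length xs \<longrightarrow> E (xs ! k) (xs ! Suc k))}"

definition gdist :: "('a \<Rightarrow> 'a \<Rightarrow> bool) \<Rightarrow> 'a \<Rightarrow> 'a \<Rightarrow> enat" where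
  "gdist E u v = (INF xs \<in> walks E u v. enat (length xs - 1))"

text \<open>Vertices of H: Inl x for x in V(J) (the identified
  vertices \<iota> i x), and Inr (i, v) for a vertex v of G_i not in J_i.
  amal_emb VJ \<iota> i is the canonical map G_i \<rightarrow> H.\<close>
definition amal_emb :: "'j set \<Rightarrow> ('i \<Rightarrow> 'j \<Rightarrow> 'v) \<Rightarrow> 'i \<Rightarrow> 'v \<Rightarrow> 'j + ('i \<times> 'v)" where
  "amal_emb VJ \<iota> i v = (if v \<in> \<iota> i ` VJ then Inl (the_inv_into VJ (\<iota> i) v) else Inr (i, v))"

definition amal_V :: "'i set \<Rightarrow> ('i \<Rightarrow> 'v set) \<Rightarrow> 'j set \<Rightarrow> ('i \<Rightarrow> 'j \<Rightarrow> 'v) \<Rightarrow> ('j + ('i \<times> 'v)) set" where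
  "amal_V I V VJ \<iota> = (\<Union>i\<in>I. amal_emb VJ \<iota> i ` V i)"

definition amal_E :: "'i set \<Rightarrow> ('i \<Rightarrow> 'v \<Rightarrow> 'v \<Rightarrow> bool) \<Rightarrow> 'j set \<Rightarrow> ('i \<Rightarrow> 'j \<Rightarrow> 'v)
                      \<Rightarrow> 'j + ('i \<times> 'v) \<Rightarrow> 'j + ('i \<times> 'v) \<Rightarrow> bool" where
  "amal_E I E VJ \<iota> a b = (\<exists>i\<in>I. \<exists>u v. E i u v \<and> a = amal_emb VJ \<iota> i u \<and> b = amal_emb VJ \<iota> i v)"

end

theory Submission
  imports Defs
begin

text \<open>
  The map \<open>G\<^sub>i \<rightarrow> H\<close> is a graph homomorphism, so it does not increase distances.
  Conversely, fix \<open>v\<close> in \<open>G\<^sub>i\<close> and extend \<open>d\<^sub>G\<^sub>i(-, v)\<close> to all of \<open>H\<close>, giving a vertex outside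
  \<open>G\<^sub>i\<close> one more than the least value on \<open>J\<^sub>i\<close>.  An edge of \<open>H\<close> leaving \<open>G\<^sub>i\<close> starts in \<open>J\<^sub>i\<close>, and
  any two vertices of \<open>J\<^sub>i\<close> are at distance at most 2 in \<open>G\<^sub>i\<close>; hence the extension changes
  by at most 1 along every edge of \<open>H\<close>, and so bounds \<open>d\<^sub>H(-, v)\<close> from below.
\<close>

lemma walks_Cons:
  "x # xs \<in> walks E a b \<longleftrightarrow>
     x = a \<and> (if xs = [] then a = b else E a (hd xs) \<and> xs \<in> walks E (hd xs) b)"
proof (cases xs)
  case Nil then show ?thesis by (auto simp: walks_def)
next
  case (Cons y ys)
  have "(\<forall>k. Suc k < length (x # xs) \<longrightarrow> E ((x # xs) ! k) ((x # xs) ! Suc k)) \<longleftrightarrow>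
        E x y \<and> (\<forall>k. Suc k < length xs \<longrightarrow> E (xs ! k) (xs ! Suc k))"
    using Cons by (auto simp: nth_Cons split: nat.splits)
  then show ?thesis using Cons by (auto simp: walks_def)
qed

lemma enat_INF_attained:
  fixes f :: "'a \<Rightarrow> enat"
  assumes "A \<noteq> {}"
  obtains x where "x \<in> A" "(INF x\<in>A. f x) = f x"
  using wellorder_InfI[of _ "f ` A"] assms by blast

lemma gdist_le_walk: "xs \<in> walks E a b \<Longrightarrow> gdist E a b \<le> enat (length xs - 1)"
  unfolding gdist_def by (rule INF_lower)

lemma gdist_refl: "gdist E a a = 0"
  using gdist_le_walk[of "[a]" E a a] by (simp add: walks_def flip: zero_enat_def)

lemma gdist_attained:
  assumes "gdist E a b \<noteq> \<infinity>"
  obtains xs where "xs \<in> walks E a b" "gdist E a b = enat (length xs - 1)"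
proof -
  have "walks E a b \<noteq> {}" using assms by (auto simp: gdist_def top_enat_def)
  then show thesis
    using that enat_INF_attained[of "walks E a b" "\<lambda>xs. enat (length xs - 1)"]
    unfolding gdist_def by metis
qed

lemma gdist_edge_le: "E a b \<Longrightarrow> gdist E a c \<le> gdist E b c + 1"
proof (cases "gdist E b c = \<infinity>")
  case False
  assume "E a b"
  obtain xs where xs: "xs \<in> walks E b c" "gdist E b c = enat (length xs - 1)"
    using gdist_attained[OF False] .
  then have "xs \<noteq> []" "hd xs = b" by (auto simp: walks_def)
  then have "a # xs \<in> walks E a c"
    using xs(1) \<open>E a b\<close> by (simp add: walks_Cons)
  from gdist_le_walk[OF this] show ?thesis
    using xs(2) \<open>xs \<noteq> []\<close> by (simp add: one_enat_def)
qed simp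

lemma gdist_le_walk_plus: "xs \<in> walks E a b \<Longrightarrow> gdist E a c \<le> enat (length xs - 1) + gdist E b c"
proof (induction xs arbitrary: a)
  case (Cons x xs)
  show ?case
  proof (cases "xs = []")
    case True then show ?thesis using Cons.prems by (simp add: walks_Cons zero_enat_def)
  next
    case False
    then have edge: "E a (hd xs)" and walk: "xs \<in> walks E (hd xs) b"
      using Cons.prems by (auto simp: walks_Cons)
    have "gdist E a c \<le> gdist E (hd xs) c + 1"
      using edge by (rule gdist_edge_le)
    also have "\<dots> \<le> enat (length xs - 1) + gdist E b c + 1"
      using Cons.IH[OF walk] by (rule add_right_mono)
    also have "\<dots> = (enat (length xs - 1) + 1) + gdist E b c"
      by (simp add: ac_simps)
    also have "enat (length xs - 1) + 1 = enat (length (x # xs) - 1)"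
      using False by (simp add: one_enat_def)
    finally show ?thesis .
  qed
qed (simp add: walks_def)

lemma gdist_triangle: "gdist E a c \<le> gdist E a b + gdist E b c"
proof (cases "gdist E a b = \<infinity>")
  case False
  then obtain xs where "xs \<in> walks E a b" "gdist E a b = enat (length xs - 1)"
    by (rule gdist_attained)
  then show ?thesis using gdist_le_walk_plus by metis
qed simp

lemma gdist_hom_le:
  assumes "\<And>x y. E x y \<Longrightarrow> E' (f x) (f y)"
  shows "gdist E' (f a) (f b) \<le> gdist E a b"
  unfolding gdist_def
proof (rule INF_mono)
  fix xs assume "xs \<in> walks E a b"
  then have "map f xs \<in> walks E' (f a) (f b)"
    using assms by (auto simp: walks_def hd_map last_map)
  then show "\<exists>ys\<in>walks E' (f a) (f b). enat (length ys - 1) \<le> enat (length xs - 1)"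
    by force
qed

lemma gdist_lower_bound:
  fixes f :: "'a \<Rightarrow> enat"
  assumes "f t = 0" and "\<And>a b. E a b \<Longrightarrow> f a \<le> f b + 1"
  shows "f a \<le> gdist E a t"
  unfolding gdist_def
proof (rule INF_greatest)
  fix xs assume "xs \<in> walks E a t"
  then show "f a \<le> enat (length xs - 1)"
  proof (induction xs arbitrary: a)
    case (Cons x xs)
    show ?case
    proof (cases "xs = []")
      case True then show ?thesis using Cons.prems assms(1) by (simp add: walks_Cons)
    next
      case False
      then have "E a (hd xs)" "xs \<in> walks E (hd xs) t" using Cons.prems by (auto simp: walks_Cons)
      then have "f a \<le> enat (length xs - 1) + 1"
        using assms(2) Cons.IH by (metis add_right_mono order_trans)
      then show ?thesis using False by (cases xs) (auto simp: one_enat_def)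
    qed
  qed (simp add: walks_def)
qed

locale amalgamation =
  fixes I :: "'i set" and V :: "'i \<Rightarrow> 'v set" and E :: "'i \<Rightarrow> 'v \<Rightarrow> 'v \<Rightarrow> bool"
    and VJ :: "'j set" and EJ :: "'j \<Rightarrow> 'j \<Rightarrow> bool" and \<iota> :: "'i \<Rightarrow> 'j \<Rightarrow> 'v"
  assumes graphs: "\<forall>i\<in>I. is_graph (V i) (E i)"
    and graph_J: "is_graph VJ EJ"
    and embeddings: "\<forall>i\<in>I. inj_on (\<iota> i) VJ \<and> \<iota> i ` VJ \<subseteq> V i"
    and induced: "\<forall>i\<in>I. \<forall>x\<in>VJ. \<forall>y\<in>VJ. E i (\<iota> i x) (\<iota> i y) \<longleftrightarrow> EJ x y"
begin

abbreviation emb :: "'i \<Rightarrow> 'v \<Rightarrow> 'j + ('i \<times> 'v)" where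
  "emb \<equiv> amal_emb VJ \<iota>"

abbreviation amal_edge :: "'j + ('i \<times> 'v) \<Rightarrow> 'j + ('i \<times> 'v) \<Rightarrow> bool" where
  "amal_edge \<equiv> amal_E I E VJ \<iota>"

lemma emb_eq_Inl_iff: "i \<in> I \<Longrightarrow> emb i w = Inl x \<longleftrightarrow> x \<in> VJ \<and> w = \<iota> i x"
  using embeddings
  by (auto simp: amal_emb_def f_the_inv_into_f the_inv_into_into the_inv_into_f_f split: if_splits)

lemma emb_eq_Inr_iff: "emb i w = Inr p \<longleftrightarrow> w \<notin> \<iota> i ` VJ \<and> p = (i, w)"
  by (auto simp: amal_emb_def)

lemma emb_eq_iff:
  assumes "i \<in> I" "j \<in> I"
  shows "emb i w = emb j w' \<longleftrightarrow> i = j \<and> w = w' \<or> (\<exists>x\<in>VJ. w = \<iota> i x \<and> w' = \<iota> j x)"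
proof (cases "emb i w")
  case (Inl x)
  then have x: "x \<in> VJ" "w = \<iota> i x" using emb_eq_Inl_iff[OF assms(1)] by auto
  have "(\<exists>y\<in>VJ. w = \<iota> i y \<and> w' = \<iota> j y) \<longleftrightarrow> w' = \<iota> j x"
    using x embeddings assms(1) by (auto dest: inj_onD)
  moreover have "emb i w = emb j w' \<longleftrightarrow> w' = \<iota> j x"
    using Inl x emb_eq_Inl_iff[OF assms(2), of w' x] by auto
  ultimately show ?thesis using x by auto
next
  case (Inr p)
  then have "w \<notin> \<iota> i ` VJ" "emb i w = Inr (i, w)" by (auto simp: emb_eq_Inr_iff)
  then have "emb i w = emb j w' \<longleftrightarrow> emb j w' = Inr (i, w)" by auto
  also have "\<dots> \<longleftrightarrow> i = j \<and> w = w'"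
    using \<open>w \<notin> \<iota> i ` VJ\<close> emb_eq_Inr_iff by auto
  finally show ?thesis using \<open>w \<notin> \<iota> i ` VJ\<close> by auto
qed

lemma inj_emb: "i \<in> I \<Longrightarrow> inj (emb i)"
  by (auto intro: injI simp: emb_eq_iff)

lemma amal_edge_sym: "amal_edge a b \<Longrightarrow> amal_edge b a"
  using graphs unfolding amal_E_def is_graph_def by metis

lemma amal_edge_emb_iff:
  assumes "i \<in> I"
  shows "amal_edge (emb i w) (emb i w') \<longleftrightarrow> E i w w'"
proof
  assume "amal_edge (emb i w) (emb i w')"
  then obtain j u u' where j: "j \<in> I" "E j u u'" "emb i w = emb j u" "emb i w' = emb j u'"
    unfolding amal_E_def by blast
  show "E i w w'"
  proof (cases "i = j")
    case True
    then show ?thesis using j emb_eq_iff[OF assms assms] by auto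
  next
    case False
    then obtain x y where "x \<in> VJ" "y \<in> VJ" "w = \<iota> i x" "u = \<iota> j x" "w' = \<iota> i y" "u' = \<iota> j y"
      using j emb_eq_iff[OF assms j(1)] by metis
    then show ?thesis using induced assms j by auto
  qed
qed (use assms in \<open>auto simp: amal_E_def\<close>)

lemma amal_edge_leaving:
  assumes "i \<in> I" "amal_edge (emb i w) b" "b \<notin> emb i ` V i"
  shows "w \<in> \<iota> i ` VJ"
proof -
  obtain j u u' where j: "j \<in> I" "E j u u'" "emb i w = emb j u" "b = emb j u'"
    using assms(2) unfolding amal_E_def by blast
  have "u' \<in> V j" using graphs j unfolding is_graph_def by blast
  then have "i \<noteq> j" using assms(3) j by blast
  then show ?thesis using j emb_eq_iff[OF assms(1) j(1)] by blast
qed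

lemma gdist_iota_le: "i \<in> I \<Longrightarrow> gdist (E i) (\<iota> i x) (\<iota> i y) \<le> gdist EJ x y"
  by (rule gdist_hom_le) (use graph_J induced in \<open>auto simp: is_graph_def\<close>)

lemma gdist_amal_le: "i \<in> I \<Longrightarrow> gdist amal_edge (emb i u) (emb i v) \<le> gdist (E i) u v"
  by (rule gdist_hom_le) (simp add: amal_edge_emb_iff)

definition shadow_dist :: "'i \<Rightarrow> 'v \<Rightarrow> 'j + ('i \<times> 'v) \<Rightarrow> enat" where
  "shadow_dist i v c =
     (if c \<in> emb i ` V i then gdist (E i) (inv (emb i) c) v
      else (INF x\<in>VJ. gdist (E i) (\<iota> i x) v) + 1)"

lemma shadow_dist_emb: "i \<in> I \<Longrightarrow> w \<in> V i \<Longrightarrow> shadow_dist i v (emb i w) = gdist (E i) w v"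
  by (simp add: shadow_dist_def inv_f_f inj_emb)

lemma shadow_dist_edge:
  assumes diam: "\<forall>x\<in>VJ. \<forall>y\<in>VJ. gdist EJ x y \<le> 2"
    and i: "i \<in> I" and edge: "amal_edge c c'"
  shows "shadow_dist i v c \<le> shadow_dist i v c' + 1"
proof (cases "c \<in> emb i ` V i"; cases "c' \<in> emb i ` V i")
  assume "c \<in> emb i ` V i" "c' \<in> emb i ` V i"
  then obtain w w' where "w \<in> V i" "w' \<in> V i" "c = emb i w" "c' = emb i w'" by blast
  then show ?thesis
    using edge gdist_edge_le amal_edge_emb_iff[OF i] by (simp add: shadow_dist_emb i)
next
  assume c: "c \<in> emb i ` V i" and c': "c' \<notin> emb i ` V i"
  then obtain w where w: "w \<in> V i" "c = emb i w" by blast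
  then obtain y where y: "y \<in> VJ" "w = \<iota> i y"
    using amal_edge_leaving[OF i _ c'] edge by blast
  have shadow_c: "shadow_dist i v c = gdist (E i) (\<iota> i y) v"
    using w y by (simp add: shadow_dist_emb i)
  obtain x where x: "x \<in> VJ" "(INF x\<in>VJ. gdist (E i) (\<iota> i x) v) = gdist (E i) (\<iota> i x) v"
    using enat_INF_attained[of VJ] y(1) by blast
  have "gdist (E i) (\<iota> i y) v \<le> gdist (E i) (\<iota> i y) (\<iota> i x) + gdist (E i) (\<iota> i x) v"
    by (rule gdist_triangle)
  also have "\<dots> \<le> 2 + gdist (E i) (\<iota> i x) v"
    using gdist_iota_le[OF i, of y x] diam x(1) y(1) by (auto intro: add_right_mono order_trans)
  also have "\<dots> = shadow_dist i v c' + 1"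
    using c' x(2) by (simp add: shadow_dist_def ac_simps flip: one_add_one)
  finally show ?thesis using shadow_c by simp
next
  assume c: "c \<notin> emb i ` V i" and c': "c' \<in> emb i ` V i"
  then obtain w' where w': "w' \<in> V i" "c' = emb i w'" by blast
  then obtain y where y: "y \<in> VJ" "w' = \<iota> i y"
    using amal_edge_leaving[OF i _ c] amal_edge_sym[OF edge] by blast
  have "shadow_dist i v c' = gdist (E i) (\<iota> i y) v"
    using w' y by (simp add: shadow_dist_emb i)
  moreover have "(INF x\<in>VJ. gdist (E i) (\<iota> i x) v) \<le> gdist (E i) (\<iota> i y) v"
    using y(1) by (rule INF_lower)
  ultimately show ?thesis
    using c by (simp add: shadow_dist_def add_right_mono)
next
  assume "c \<notin> emb i ` V i" "c' \<notin> emb i ` V i"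
  then show ?thesis by (simp add: shadow_dist_def)
qed

theorem gdist_amal_emb:
  assumes "\<forall>x\<in>VJ. \<forall>y\<in>VJ. gdist EJ x y \<le> 2"
    and "i \<in> I" "u \<in> V i" "v \<in> V i"
  shows "gdist amal_edge (emb i u) (emb i v) = gdist (E i) u v"
proof (rule antisym)
  show "gdist amal_edge (emb i u) (emb i v) \<le> gdist (E i) u v"
    using assms(2) by (rule gdist_amal_le)
  have "shadow_dist i v (emb i u) \<le> gdist amal_edge (emb i u) (emb i v)"
    by (rule gdist_lower_bound)
      (use assms shadow_dist_edge in \<open>simp_all add: shadow_dist_emb gdist_refl\<close>)
  then show "gdist (E i) u v \<le> gdist amal_edge (emb i u) (emb i v)"
    using assms by (simp add: shadow_dist_emb)
qed

end

theorem lemma3: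
  fixes I :: "'i set" and V :: "'i \<Rightarrow> 'v set" and E :: "'i \<Rightarrow> 'v \<Rightarrow> 'v \<Rightarrow> bool"
    and VJ :: "'j set" and EJ :: "'j \<Rightarrow> 'j \<Rightarrow> bool" and \<iota> :: "'i \<Rightarrow> 'j \<Rightarrow> 'v"
  assumes "\<forall>i\<in>I. is_graph (V i) (E i)"
    and "is_graph VJ EJ"
    and "\<forall>i\<in>I. inj_on (\<iota> i) VJ \<and> \<iota> i ` VJ \<subseteq> V i"
    and "\<forall>i\<in>I. \<forall>x\<in>VJ. \<forall>y\<in>VJ. E i (\<iota> i x) (\<iota> i y) \<longleftrightarrow> EJ x y"
    and "\<forall>x\<in>VJ. \<forall>y\<in>VJ. gdist EJ x y \<le> 2"
  shows "\<forall>i\<in>I. \<forall>u\<in>V i. \<forall>v\<in>V i.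
           gdist (amal_E I E VJ \<iota>) (amal_emb VJ \<iota> i u) (amal_emb VJ \<iota> i v) = gdist (E i) u v"
proof -
  interpret amalgamation I V E VJ EJ \<iota>
    using assms(1-4) by unfold_locales
  show ?thesis
    using gdist_amal_emb[OF assms(5)] by blast
qed

end
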